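(* Assume (H$\mathscr K$), (H$\mathscr L$), (H$\mathscr M$), (H$\mathscr F$), (H$\mathscr G$), (H$\mathscr E$), (H$\gamma$), (H$\Psi$), $c_{\mathscr F}>c_{\mathscr G}\|\gamma\|^p$, and that $\mathscr F$ is strictly monotone, so that Problem 2 has a unique solution $\mathscr S(z,\xi)$ for each $(z,\xi)\in\mathscr K\times Y^*$. Then the map $\mathscr S\colon\mathscr K\times Y^*\to\mathcal W\cap\mathscr K$ is bounded: it maps bounded subsets of $\mathscr K\times Y^*$ (with norm $\|z\|_X+\|\xi\|_{Y^*}$) into bounded subsets of $\mathcal W$.
   Context: Setting. $X$ and $Y$ are real reflexive separable Banach spaces with duals $X^*,Y^*$; $\langle\cdot,\cdot\rangle_X$ and $\langle\cdot,\cdot\rangle_Y$ denote the duality pairings. Fix $1<p<\infty$. $\rightharpoonup$ denotes weak convergence. (H$\mathscr L$) $\mathscr L\colon D(\mathscr L)\subset X\to X^*$ is linear, densely defined and maximal monotone. Put $\mathcal W:=\{x\in D(\mathscr L): \mathscr Lx\in X^*\}$ with the graph norm $\|x\|_{\mathcal W}=\|x\|_X+\|\mathscr Lx\|_{X^*}$; "$x_n\rightharpoonup x$ in $\mathcal W$" means $x_n\rightharpoonup x$ in $X$ and $\mathscr Lx_n\rightharpoonup \mathscr Lx$ in $X^*$. (H$\mathscr K$) $\mathscr K\subset X$ is nonempty, closed and convex. (H$\mathscr M$) $\mathscr M\colon\mathscr K\to 2^{\mathscr K}$ has nonempty, closed, convex values, $0\in\operatorname{int}\big(\bigcap_{w\in\mathscr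 K}\mathscr M(w)\big)$, and: whenever $\{y_n\},\{x_n\}\subset\mathscr K$ satisfy $x_n\in\mathscr M(y_n)\cap D(\mathscr L)$, $y_n\rightharpoonup y$ in $\mathcal W$ and $x_n\rightharpoonup x$ in $\mathcal W$, then $x\in\mathscr M(y)\cap D(\mathscr L)$. (H$\mathscr F$) $\mathscr F\colon X\to X^*$ is bounded (maps bounded sets to bounded sets), monotone and hemicontinuous, and there are constants $c_{\mathscr F}>0$, $d_{\mathscr F}\ge 0$ with $\langle\mathscr F(x),x\rangle_X\ge c_{\mathscr F}\|x\|_X^p-d_{\mathscr F}$ for all $x\in X$. (H$\mathscr G$) $\mathscr G\colon Y\to 2^{Y^*}$ has nonempty, closed, convex values, its graph is sequentially closed with respect to strong convergence in $Y$ and weak convergence in $Y^*$, and there are constants $c_{\mathscr G},d_{\mathscr G}\ge0$ with $\|\xi\|_{Y^*}\le c_{\mathscr G}\|z\|_Y^{p-1}+d_{\mathscr G}$ for all $\xi\in\mathscr G(z)$, $z\in Y$. (H$\mathscr E$) $\mathscr E\in X^*$. (H$\gamma$) $\gamma\colon X\to Y$ is linear and continuous, with operator norm $\|\gamma\|$, and its restriction to $\mathcal W$ is compact from $\mathcal W$ into $Y$. (H$\Psi$) $\Psi\colon X\times X\to\mathbb R$ satisfies: (i) for each $x\in X$, $\Psi(x,\cdot)$ is convex and lower semicontinuous; (ii) there are $0<\eta<p$ and a bounded function $b_\Psi\colon X^3\to[0,\infty)$ such that $\Psi(x,y_1)-\Psi(x,y_2)\le b_\Psi(x,y_1,y_2)\|y_1-y_2\|_X^\eta$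 for all $x,y_1,y_2\in X$, and for each bounded $B\subset X$, $b_\Psi(z,0,x)/\|x\|_X^{p-\eta}\to0$ as $\|x\|_X\to\infty$ uniformly in $z\in B$; (iii) $\limsup_{n}(\Psi(w_n,y_n)-\Psi(w_n,x_n))\le\Psi(w,y)-\Psi(w,x)$ whenever $\{w_n\},\{y_n\},\{x_n\}\subset\mathscr K\cap D(\mathscr L)$ with $w_n\rightharpoonup w$, $x_n\rightharpoonup x$ in $\mathcal W$ and $y_n\to y$ in $X$; (iv) for every $v\in X$, $0$ belongs to the domain of the convex subdifferential $\partial\Psi(v,\cdot)$, $|\Psi(v,0)|\le e_\Psi$ for a constant $e_\Psi$, and there are constants $c_\Psi,d_\Psi\ge0$ and $1\le\beta<p$ with $\Psi(v,y)\ge -c_\Psi\|y\|_X^\beta-d_\Psi$ for all $v,y\in X$. Problem 2 (for given $(z,\xi)\in\mathscr K\times Y^*$): find $x\in\mathscr M(z)\cap D(\mathscr L)$ such that $\langle\mathscr Lx+\mathscr F(x)-\mathscr E,y-x\rangle_X+\langle\xi,\gamma(y-x)\rangle_Y\ge\Psi(z,x)-\Psi(z,y)$ for all $y\in\mathscr M(z)\cap D(\mathscr L)$. *)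

theory Defs
  imports "HOL-Analysis.Analysis"
begin

text \<open>Dual space of a real normed space: bounded linear functionals,
  with the operator norm; the duality pairing is function application.\<close>

definition reflexive_space :: "'a::real_normed_vector itself \<Rightarrow> bool" where
  "reflexive_space _ \<longleftrightarrow>
     (\<forall>\<phi> :: ('a \<Rightarrow>\<^sub>L real) \<Rightarrow>\<^sub>L real. \<exists>x::'a. \<forall>f. blinfun_apply \<phi> f = blinfun_apply f x)"

definition separable_space :: "'a::real_normed_vector itself \<Rightarrow> bool" where
  "separable_space _ \<longleftrightarrow> (\<exists>S::'a set. countable S \<and> closure S = UNIV)"

definition weak_conv :: "(nat \<Rightarrow> 'a::real_normed_vector) \<Rightarrow> 'a \<Rightarrow> bool" where
  "weak_conv xs x \<longleftrightarrow> (\<forall>f :: 'a \<Rightarrow>\<^sub>L real. (\<lambda>n. blinfun_apply f (xs n)) \<longlonglongrightarrow> blinfun_apply f x)"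

definition weak_conv_W :: "('a::real_normed_vector \<Rightarrow> ('a \<Rightarrow>\<^sub>L real))
     \<Rightarrow> (nat \<Rightarrow> 'a) \<Rightarrow> 'a \<Rightarrow> bool" where
  "weak_conv_W L xs x \<longleftrightarrow> weak_conv xs x \<and> weak_conv (\<lambda>n. L (xs n)) (L x)"

definition lsc :: "('a::topological_space \<Rightarrow> real) \<Rightarrow> bool" where
  "lsc f \<longleftrightarrow> (\<forall>c. closed {y. f y \<le> c})"

definition maps_bounded :: "('a::real_normed_vector \<Rightarrow> 'b::real_normed_vector) \<Rightarrow> bool" where
  "maps_bounded f \<longleftrightarrow> (\<forall>B. bounded B \<longrightarrow> bounded (f ` B))"

definition problem2 ::
  "'x::real_normed_vector set \<Rightarrow> ('x \<Rightarrow> ('x \<Rightarrow>\<^sub>L real)) \<Rightarrow> ('x \<Rightarrow> ('x \<Rightarrow>\<^sub>L real))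
   \<Rightarrow> ('x \<Rightarrow>\<^sub>L real) \<Rightarrow> ('x \<Rightarrow>\<^sub>L 'y::real_normed_vector) \<Rightarrow> ('x \<Rightarrow> 'x set)
   \<Rightarrow> ('x \<Rightarrow> 'x \<Rightarrow> real) \<Rightarrow> 'x \<Rightarrow> ('y \<Rightarrow>\<^sub>L real) \<Rightarrow> 'x \<Rightarrow> bool" where
  "problem2 D L F E \<gamma> M \<Psi> z \<xi> x \<longleftrightarrow>
     x \<in> M z \<inter> D \<and>
     (\<forall>y \<in> M z \<inter> D. blinfun_apply (L x + F x - E) (y - x) + blinfun_apply \<xi> (blinfun_apply \<gamma> (y - x)) \<ge> \<Psi> z x - \<Psi> z y)"

end

theory Submission
  imports Defs
begin

text \<open>Testing Problem 2 with \<open>y = 0\<close> and using the monotonicity of \<open>L\<close>, the coercivity of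
  \<open>F\<close> and the growth bounds on \<open>\<Psi>\<close> gives
  \<open>c_F \<parallel>x\<parallel>\<^sup>p \<le> a \<parallel>x\<parallel> + b \<parallel>x\<parallel>\<^sup>\<beta> + d\<close> with \<open>\<beta> < p\<close>, which bounds \<open>\<parallel>x\<parallel>\<close>.
  Testing with \<open>y = \<plusminus>v\<close> for \<open>v\<close> in a ball around \<open>0\<close> contained in every \<open>M z\<close> then
  bounds \<open>L x v\<close> from both sides, hence \<open>\<parallel>L x\<parallel>\<close>, after extending the bound from the dense
  domain \<open>D\<close> to the whole ball.\<close>

lemma powr_dominated_bounded:
  fixes c p q a b d :: real
  assumes c: "0 < c" and q: "1 \<le> q" "q < p"
  shows "\<exists>T. \<forall>t\<ge>0. c * t powr p \<le> a * t + b * t powr q + d \<longrightarrow> t \<le> T"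
proof -
  define k where "k = \<bar>a\<bar> + \<bar>b\<bar> + \<bar>d\<bar>"
  define T where "T = max 1 ((k / c) powr (1 / (p - q)))"
  have "t \<le> T" if "c * t powr p \<le> a * t + b * t powr q + d" for t
  proof (rule ccontr)
    assume "\<not> t \<le> T"
    then have t1: "1 < t" and tk: "(k / c) powr (1 / (p - q)) < t" by (auto simp: T_def)
    have tq: "t \<le> t powr q" "1 \<le> t powr q"
      using powr_mono[OF q(1), of t] t1 by auto
    have "a * t \<le> \<bar>a\<bar> * t" using t1 by (intro mult_right_mono) auto
    also have "\<dots> \<le> \<bar>a\<bar> * t powr q" using tq by (intro mult_left_mono) auto
    finally have "a * t \<le> \<bar>a\<bar> * t powr q" .
    moreover have "b * t powr q \<le> \<bar>b\<bar> * t powr q"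
      using tq by (intro mult_right_mono) auto
    moreover have "d \<le> \<bar>d\<bar> * t powr q"
      using tq mult_left_mono[of 1 "t powr q" "\<bar>d\<bar>"] by simp
    ultimately have "a * t + b * t powr q + d \<le> \<bar>a\<bar> * t powr q + \<bar>b\<bar> * t powr q + \<bar>d\<bar> * t powr q"
      by linarith
    also have "\<dots> = k * t powr q" by (simp add: k_def algebra_simps)
    also have "\<dots> < c * t powr (p - q) * t powr q"
    proof -
      have "k / c = ((k / c) powr (1 / (p - q))) powr (p - q)"
        using c q by (simp add: powr_powr k_def)
      also have "\<dots> < t powr (p - q)"
        using tk q by (intro powr_less_mono2) auto
      finally show ?thesis using c t1 by (simp add: field_simps)
    qed
    also have "\<dots> = c * t powr p" by (simp add: powr_add[symmetric])
    finally show False using that by simp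
  qed
  then show ?thesis by blast
qed

lemma norm_blinfun_le_of_dense_ball:
  fixes f :: "'a::real_normed_vector \<Rightarrow>\<^sub>L 'b::real_normed_vector"
  assumes dense: "closure D = UNIV" and r: "0 < r"
    and bound: "\<And>v. v \<in> D \<Longrightarrow> norm v < r \<Longrightarrow> norm (f v) \<le> C"
  shows "norm f \<le> 2 * C / r"
proof -
  have "ball 0 r \<inter> D \<subseteq> {v. norm (f v) \<le> C}" using bound by auto
  then have "closure (ball 0 r \<inter> D) \<subseteq> {v. norm (f v) \<le> C}"
    by (rule closure_minimal) (intro closed_Collect_le continuous_intros)
  moreover have "ball 0 r \<subseteq> closure (ball 0 r \<inter> D)"
    using open_Int_closure_subset[of "ball 0 r" D] dense by simp
  ultimately have ball_bound: "norm (f v) \<le> C" if "norm v < r" for v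
    using that by auto
  show ?thesis
  proof (rule norm_blinfun_bound)
    show "0 \<le> 2 * C / r" using ball_bound[of 0] r by simp
    show "norm (f w) \<le> 2 * C / r * norm w" for w
    proof (cases "w = 0")
      case False
      define s where "s = r / (2 * norm w)"
      have "norm (s *\<^sub>R w) < r" using False r by (simp add: s_def)
      then have "s * norm (f w) \<le> C"
        using ball_bound[of "s *\<^sub>R w"] False r by (simp add: s_def blinfun.scaleR_right)
      then show ?thesis using False r by (simp add: s_def field_simps)
    qed simp
  qed
qed

lemma abs_blinfun_apply_comp_le:
  fixes \<xi> :: "'b::real_normed_vector \<Rightarrow>\<^sub>L real" and \<gamma> :: "'a::real_normed_vector \<Rightarrow>\<^sub>L 'b"
  shows "\<bar>\<xi> (\<gamma> u)\<bar> \<le> norm \<xi> * norm \<gamma> * norm u"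
proof -
  have "\<bar>\<xi> (\<gamma> u)\<bar> \<le> norm \<xi> * norm (\<gamma> u)" using norm_blinfun[of \<xi> "\<gamma> u"] by simp
  also have "\<dots> \<le> norm \<xi> * (norm \<gamma> * norm u)" by (intro mult_left_mono norm_blinfun) simp
  finally show ?thesis by (simp add: mult.assoc)
qed

lemma problem2_testD:
  fixes L F :: "'x::real_normed_vector \<Rightarrow> ('x \<Rightarrow>\<^sub>L real)" and E :: "'x \<Rightarrow>\<^sub>L real"
    and \<gamma> :: "'x \<Rightarrow>\<^sub>L 'y::real_normed_vector" and \<xi> :: "'y \<Rightarrow>\<^sub>L real"
  assumes "problem2 D L F E \<gamma> M \<Psi> z \<xi> x" "y \<in> M z" "y \<in> D"
  shows "L x x + \<Psi> z x \<le> L x y + \<Psi> z y + (F x - E) (y - x) + \<xi> (\<gamma> (y - x))"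
proof -
  have "\<Psi> z x - \<Psi> z y \<le> (L x + F x - E) (y - x) + \<xi> (\<gamma> (y - x))"
    using assms unfolding problem2_def by blast
  then show ?thesis by (simp add: blinfun.add_left blinfun.diff_left blinfun.diff_right)
qed

lemma problem2_energy_estimate:
  fixes L F :: "'x::real_normed_vector \<Rightarrow> ('x \<Rightarrow>\<^sub>L real)" and E :: "'x \<Rightarrow>\<^sub>L real"
    and \<gamma> :: "'x \<Rightarrow>\<^sub>L 'y::real_normed_vector" and \<xi> :: "'y \<Rightarrow>\<^sub>L real"
  assumes P: "problem2 D L F E \<gamma> M \<Psi> z \<xi> x" and "0 \<in> M z" "0 \<in> D"
    and L_mono: "0 \<le> L x x"
    and F_coerc: "c_F * norm x powr p - d_F \<le> F x x"
    and "\<Psi> z 0 \<le> e" "- c\<^sub>\<Psi> * norm x powr \<beta> - d\<^sub>\<Psi> \<le> \<Psi> z x"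
  shows "c_F * norm x powr p
    \<le> (norm E + norm \<xi> * norm \<gamma>) * norm x + c\<^sub>\<Psi> * norm x powr \<beta> + (e + d\<^sub>\<Psi> + d_F)"
proof -
  have "L x x + \<Psi> z x \<le> L x 0 + \<Psi> z 0 + (F x - E) (0 - x) + \<xi> (\<gamma> (0 - x))"
    using problem2_testD[OF P] assms(2,3) .
  then have "L x x + F x x + \<Psi> z x \<le> \<Psi> z 0 + E x - \<xi> (\<gamma> x)"
    by (simp add: blinfun.diff_left blinfun.minus_right)
  moreover have "E x \<le> norm E * norm x" using norm_blinfun[of E x] by simp
  moreover have "- \<xi> (\<gamma> x) \<le> norm \<xi> * norm \<gamma> * norm x"
    using abs_blinfun_apply_comp_le[of \<xi> \<gamma> x] by simp
  ultimately show ?thesis using assms(4-) by (simp add: algebra_simps)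
qed

lemma problem2_solutions_norm_bounded:
  fixes L F :: "'x::real_normed_vector \<Rightarrow> ('x \<Rightarrow>\<^sub>L real)" and E :: "'x \<Rightarrow>\<^sub>L real"
    and \<gamma> :: "'x \<Rightarrow>\<^sub>L 'y::real_normed_vector"
  assumes "0 < c_F" "1 \<le> \<beta>" "\<beta> < p"
    and "\<And>z. z \<in> K \<Longrightarrow> 0 \<in> M z" "0 \<in> D"
    and "\<And>x. x \<in> D \<Longrightarrow> 0 \<le> L x x"
    and "\<And>x. c_F * norm x powr p - d_F \<le> F x x"
    and "\<And>v. \<Psi> v 0 \<le> e" "\<And>v y. - c\<^sub>\<Psi> * norm y powr \<beta> - d\<^sub>\<Psi> \<le> \<Psi> v y"
  obtains \<rho> where
    "\<And>z \<xi> x. z \<in> K \<Longrightarrow> norm \<xi> \<le> R \<Longrightarrow> problem2 D L F E \<gamma> M \<Psi> z \<xi> x \<Longrightarrow> norm x \<le> \<rho>"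
proof -
  obtain T where T: "\<And>t. 0 \<le> t \<Longrightarrow>
      c_F * t powr p \<le> (norm E + R * norm \<gamma>) * t + c\<^sub>\<Psi> * t powr \<beta> + (e + d\<^sub>\<Psi> + d_F) \<Longrightarrow> t \<le> T"
    using powr_dominated_bounded[OF assms(1-3)] by blast
  have "norm x \<le> T" if "z \<in> K" "norm \<xi> \<le> R" and P: "problem2 D L F E \<gamma> M \<Psi> z \<xi> x" for z \<xi> x
  proof (rule T)
    have "x \<in> D" using P by (simp add: problem2_def)
    then have "c_F * norm x powr p
        \<le> (norm E + norm \<xi> * norm \<gamma>) * norm x + c\<^sub>\<Psi> * norm x powr \<beta> + (e + d\<^sub>\<Psi> + d_F)"
      using problem2_energy_estimate[OF P] assms that by blast
    also have "\<dots> \<le> (norm E + R * norm \<gamma>) * norm x + c\<^sub>\<Psi> * norm x powr \<beta> + (e + d\<^sub>\<Psi> + d_F)"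
      using that(2) by (intro add_right_mono mult_right_mono add_left_mono) auto
    finally show "c_F * norm x powr p
        \<le> (norm E + R * norm \<gamma>) * norm x + c\<^sub>\<Psi> * norm x powr \<beta> + (e + d\<^sub>\<Psi> + d_F)" .
  qed simp
  then show ?thesis by (rule that)
qed

lemma psi_bounded_above_on_balls:
  fixes \<Psi> :: "'a::real_normed_vector \<Rightarrow> 'a \<Rightarrow> real"
  assumes "0 \<le> \<eta>"
    and b_bdd: "\<And>B. bounded B \<Longrightarrow> bounded ((\<lambda>(x, y, z). b x y z) ` B)"
    and \<Psi>_diff: "\<And>x y1 y2. \<Psi> x y1 - \<Psi> x y2 \<le> b x y1 y2 * norm (y1 - y2) powr \<eta>"
    and \<Psi>_0: "\<And>v. \<Psi> v 0 \<le> e"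
  obtains B where "\<And>z v. norm z \<le> R \<Longrightarrow> norm v \<le> r \<Longrightarrow> \<Psi> z v \<le> B"
proof -
  have "bounded ((\<lambda>(x, y, z). b x y z) ` (cball (0::'a) R \<times> cball (0::'a) r \<times> {0::'a}))"
    by (intro b_bdd bounded_Times) auto
  then obtain Bb where Bb: "\<And>z v. norm z \<le> R \<Longrightarrow> norm v \<le> r \<Longrightarrow> norm (b z v 0) \<le> Bb"
    unfolding bounded_iff by force
  have "\<Psi> z v \<le> e + Bb * r powr \<eta>" if "norm z \<le> R" "norm v \<le> r" for z v
  proof -
    have "b z v 0 * norm v powr \<eta> \<le> Bb * r powr \<eta>"
      using Bb[OF that] that(2) \<open>0 \<le> \<eta>\<close>
      by (intro mult_mono powr_mono2) (auto intro: order_trans[OF norm_ge_zero])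
    then show ?thesis using \<Psi>_diff[of z v 0] \<Psi>_0[of z] by simp
  qed
  then show ?thesis by (rule that)
qed

lemma problem2_norm_L_le:
  fixes L F :: "'x::real_normed_vector \<Rightarrow> ('x \<Rightarrow>\<^sub>L real)" and E :: "'x \<Rightarrow>\<^sub>L real"
    and \<gamma> :: "'x \<Rightarrow>\<^sub>L 'y::real_normed_vector" and \<xi> :: "'y \<Rightarrow>\<^sub>L real"
  assumes P: "problem2 D L F E \<gamma> M \<Psi> z \<xi> x"
    and r: "0 < r" "ball 0 r \<subseteq> M z" and D: "subspace D" "closure D = UNIV"
    and L_mono: "0 \<le> L x x"
    and \<Psi>_max: "\<And>v. norm v < r \<Longrightarrow> \<Psi> z v \<le> \<Psi>\<^sub>m\<^sub>a\<^sub>x" and \<Psi>_min: "\<Psi>\<^sub>m\<^sub>i\<^sub>n \<le> \<Psi> z x"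
  shows "norm (L x)
    \<le> 2 * (\<Psi>\<^sub>m\<^sub>a\<^sub>x - \<Psi>\<^sub>m\<^sub>i\<^sub>n + (norm (F x - E) + norm \<xi> * norm \<gamma>) * (r + norm x)) / r"
proof (rule norm_blinfun_le_of_dense_ball[OF D(2) r(1)])
  define C where "C = \<Psi>\<^sub>m\<^sub>a\<^sub>x - \<Psi>\<^sub>m\<^sub>i\<^sub>n + (norm (F x - E) + norm \<xi> * norm \<gamma>) * (r + norm x)"
  have lower: "- C \<le> L x v" if "v \<in> D" "norm v < r" for v
  proof -
    have tested: "L x x + \<Psi> z x \<le> L x v + \<Psi> z v + (F x - E) (v - x) + \<xi> (\<gamma> (v - x))"
      using problem2_testD[OF P] r(2) that by auto
    have dist: "norm (v - x) \<le> r + norm x" using norm_triangle_ineq4[of v x] that(2) by simp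
    have "(F x - E) (v - x) \<le> norm (F x - E) * (r + norm x)"
      using norm_blinfun[of "F x - E" "v - x"] dist
      by (smt (verit, best) mult_left_mono norm_ge_zero real_norm_def)
    moreover have "\<xi> (\<gamma> (v - x)) \<le> norm \<xi> * norm \<gamma> * (r + norm x)"
      using abs_blinfun_apply_comp_le[of \<xi> \<gamma> "v - x"] dist
      by (smt (verit, best) mult_left_mono mult_nonneg_nonneg norm_ge_zero)
    ultimately show ?thesis
      using tested L_mono \<Psi>_max[OF that(2)] \<Psi>_min by (simp add: C_def algebra_simps)
  qed
  show "norm (L x v) \<le> C" if "v \<in> D" "norm v < r" for v
  proof -
    have "- C \<le> L x (- v)" using lower D(1) that by (simp add: subspace_neg)
    then show ?thesis using lower[OF that] by (simp add: blinfun.minus_right)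
  qed
qed

lemma problem2_graph_norm_bounded:
  fixes L F :: "'x::real_normed_vector \<Rightarrow> ('x \<Rightarrow>\<^sub>L real)" and E :: "'x \<Rightarrow>\<^sub>L real"
    and \<gamma> :: "'x \<Rightarrow>\<^sub>L 'y::real_normed_vector"
  assumes r: "0 < r" "\<And>z. z \<in> K \<Longrightarrow> ball 0 r \<subseteq> M z"
    and D: "subspace D" "closure D = UNIV"
    and L_mono: "\<And>x. x \<in> D \<Longrightarrow> 0 \<le> L x x" and F_bdd: "maps_bounded F"
    and \<Psi>_max: "\<And>z v. norm z \<le> R \<Longrightarrow> norm v \<le> r \<Longrightarrow> \<Psi> z v \<le> \<Psi>\<^sub>m\<^sub>a\<^sub>x"
    and \<Psi>_min: "0 \<le> c\<^sub>\<Psi>" "0 \<le> \<beta>" "\<And>v y. - c\<^sub>\<Psi> * norm y powr \<beta> - d\<^sub>\<Psi> \<le> \<Psi> v y"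
    and \<rho>: "\<And>z \<xi> x. z \<in> K \<Longrightarrow> norm \<xi> \<le> R \<Longrightarrow> problem2 D L F E \<gamma> M \<Psi> z \<xi> x \<Longrightarrow> norm x \<le> \<rho>"
  shows "\<exists>C. \<forall>z \<xi> x. z \<in> K \<longrightarrow> norm z + norm \<xi> \<le> R \<longrightarrow>
           problem2 D L F E \<gamma> M \<Psi> z \<xi> x \<longrightarrow> norm x + norm (L x) \<le> C"
proof -
  have "bounded (F ` cball 0 \<rho>)" using F_bdd by (simp add: maps_bounded_def)
  then obtain B\<^sub>F where B\<^sub>F: "\<And>x. norm x \<le> \<rho> \<Longrightarrow> norm (F x) \<le> B\<^sub>F"
    unfolding bounded_iff by force
  define \<Psi>\<^sub>m\<^sub>i\<^sub>n where "\<Psi>\<^sub>m\<^sub>i\<^sub>n = - c\<^sub>\<Psi> * \<rho> powr \<beta> - d\<^sub>\<Psi>"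
  define C where "C = \<Psi>\<^sub>m\<^sub>a\<^sub>x - \<Psi>\<^sub>m\<^sub>i\<^sub>n + (B\<^sub>F + norm E + R * norm \<gamma>) * (r + \<rho>)"
  have "norm x + norm (L x) \<le> \<rho> + 2 * C / r"
    if "z \<in> K" "norm z + norm \<xi> \<le> R" and P: "problem2 D L F E \<gamma> M \<Psi> z \<xi> x" for z \<xi> x
  proof -
    have nz: "norm z \<le> R" and n\<xi>: "norm \<xi> \<le> R" using that(2) norm_ge_zero by smt+
    have nx: "norm x \<le> \<rho>" using \<rho> that(1) n\<xi> P .
    have "x \<in> D" using P by (simp add: problem2_def)
    have "c\<^sub>\<Psi> * norm x powr \<beta> \<le> c\<^sub>\<Psi> * \<rho> powr \<beta>"
      using nx \<Psi>_min(1,2) by (intro mult_left_mono powr_mono2) auto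
    then have "\<Psi>\<^sub>m\<^sub>i\<^sub>n \<le> \<Psi> z x" using \<Psi>_min(3)[of x z] by (simp add: \<Psi>\<^sub>m\<^sub>i\<^sub>n_def)
    then have "norm (L x)
        \<le> 2 * (\<Psi>\<^sub>m\<^sub>a\<^sub>x - \<Psi>\<^sub>m\<^sub>i\<^sub>n + (norm (F x - E) + norm \<xi> * norm \<gamma>) * (r + norm x)) / r"
      using problem2_norm_L_le[OF P r(1) r(2)[OF that(1)] D L_mono[OF \<open>x \<in> D\<close>]] \<Psi>_max[OF nz] by simp
    also have "\<dots> \<le> 2 * C / r"
    proof -
      have F_E: "norm (F x - E) \<le> B\<^sub>F + norm E"
        using B\<^sub>F[OF nx] norm_triangle_ineq4[of "F x" E] by simp
      have \<xi>\<gamma>: "norm \<xi> * norm \<gamma> \<le> R * norm \<gamma>" using n\<xi> by (simp add: mult_right_mono)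
      have "0 \<le> R" using n\<xi> norm_ge_zero[of \<xi>] by linarith
      then have "0 \<le> R * norm \<gamma>" by simp
      then have "0 \<le> B\<^sub>F + norm E + R * norm \<gamma>"
        using F_E norm_ge_zero[of "F x - E"] by linarith
      then have "(norm (F x - E) + norm \<xi> * norm \<gamma>) * (r + norm x)
          \<le> (B\<^sub>F + norm E + R * norm \<gamma>) * (r + \<rho>)"
        using F_E \<xi>\<gamma> nx r(1) by (intro mult_mono) auto
      then show ?thesis using r(1) by (simp add: C_def divide_right_mono)
    qed
    finally show ?thesis using nx by simp
  qed
  then show ?thesis by blast
qed

theorem mainTheorem3:
  fixes D :: "'x::banach set"
    and L :: "'x \<Rightarrow> ('x \<Rightarrow>\<^sub>L real)"
    and K :: "'x set"
    and M :: "'x \<Rightarrow> 'x set"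
    and F :: "'x \<Rightarrow> ('x \<Rightarrow>\<^sub>L real)"
    and G :: "'y::banach \<Rightarrow> ('y \<Rightarrow>\<^sub>L real) set"
    and E :: "'x \<Rightarrow>\<^sub>L real"
    and \<gamma> :: "'x \<Rightarrow>\<^sub>L 'y"
    and \<Psi> :: "'x \<Rightarrow> 'x \<Rightarrow> real"
    and p c_F d_F c_G d_G :: real
  assumes spaces: "reflexive_space TYPE('x)" "separable_space TYPE('x)"
      "reflexive_space TYPE('y)" "separable_space TYPE('y)"
    and p: "1 < p"
    \<comment> \<open>(HL)\<close>
    and L_dom: "subspace D" "closure D = UNIV"
    and L_lin: "\<And>x y a b. x \<in> D \<Longrightarrow> y \<in> D \<Longrightarrow> L (a *\<^sub>R x + b *\<^sub>R y) = a *\<^sub>R L x + b *\<^sub>R L y"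
    and L_mono: "\<And>x. x \<in> D \<Longrightarrow> blinfun_apply (L x) x \<ge> 0"
    and L_maximal: "\<And>u \<eta>. (\<forall>x\<in>D. blinfun_apply (L x - \<eta>) (x - u) \<ge> 0) \<Longrightarrow> u \<in> D \<and> L u = \<eta>"
    \<comment> \<open>(HK)\<close>
    and K: "K \<noteq> {}" "closed K" "convex K"
    \<comment> \<open>(HM)\<close>
    and M_vals: "\<And>w. w \<in> K \<Longrightarrow> M w \<subseteq> K \<and> M w \<noteq> {} \<and> closed (M w) \<and> convex (M w)"
    and M_int: "0 \<in> interior (\<Inter>w\<in>K. M w)"
    and M_closed: "\<And>ys xs y x. (\<forall>n. ys n \<in> K \<and> xs n \<in> K \<and> xs n \<in> M (ys n) \<and> xs n \<in> D) \<Longrightarrow>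
        y \<in> D \<Longrightarrow> x \<in> D \<Longrightarrow> weak_conv_W L ys y \<Longrightarrow> weak_conv_W L xs x \<Longrightarrow>
        x \<in> M y \<inter> D"
    \<comment> \<open>(HF)\<close>
    and F_bdd: "maps_bounded F"
    and F_mono: "\<And>x y. blinfun_apply (F x - F y) (x - y) \<ge> 0"
    and F_hemi: "\<And>u v w. continuous_on {0..1} (\<lambda>t::real. blinfun_apply (F (u + t *\<^sub>R v)) w)"
    and F_coerc: "c_F > 0" "d_F \<ge> 0" "\<And>x. blinfun_apply (F x) x \<ge> c_F * norm x powr p - d_F"
    \<comment> \<open>(HG)\<close>
    and G_vals: "\<And>z. G z \<noteq> {} \<and> closed (G z) \<and> convex (G z)"
    and G_graph: "\<And>zs \<xi>s z \<xi>. (\<forall>n. \<xi>s n \<in> G (zs n)) \<Longrightarrow> zs \<longlonglongrightarrow> z \<Longrightarrow>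
        weak_conv \<xi>s \<xi> \<Longrightarrow> \<xi> \<in> G z"
    and G_growth: "c_G \<ge> 0" "d_G \<ge> 0"
      "\<And>z \<xi>. \<xi> \<in> G z \<Longrightarrow> norm \<xi> \<le> c_G * norm z powr (p - 1) + d_G"
    \<comment> \<open>(H\<gamma>): compactness of the restriction of \<gamma> to W\<close>
    and \<gamma>_compact: "\<And>B. B \<subseteq> D \<Longrightarrow> (\<exists>R. \<forall>x\<in>B. norm x + norm (L x) \<le> R) \<Longrightarrow>
        compact (closure (blinfun_apply \<gamma> ` B))"
    \<comment> \<open>(H\<Psi>)\<close>
    and \<Psi>_i: "\<And>x. convex_on UNIV (\<Psi> x) \<and> lsc (\<Psi> x)"
    and \<Psi>_ii: "\<exists>\<eta> (b :: 'x \<Rightarrow> 'x \<Rightarrow> 'x \<Rightarrow> real). 0 < \<eta> \<and> \<eta> < p \<and>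
        (\<forall>x y z. b x y z \<ge> 0) \<and>
        (\<forall>B. bounded B \<longrightarrow> bounded ((\<lambda>(x, y, z). b x y z) ` B)) \<and>
        (\<forall>x y1 y2. \<Psi> x y1 - \<Psi> x y2 \<le> b x y1 y2 * norm (y1 - y2) powr \<eta>) \<and>
        (\<forall>B. bounded B \<longrightarrow> (\<forall>\<epsilon>>0. \<exists>R. \<forall>z\<in>B. \<forall>x. norm x \<ge> R \<longrightarrow>
            b z 0 x / norm x powr (p - \<eta>) \<le> \<epsilon>))"
    and \<Psi>_iii: "\<And>ws ys xs w y x. (\<forall>n. ws n \<in> K \<inter> D \<and> ys n \<in> K \<inter> D \<and> xs n \<in> K \<inter> D) \<Longrightarrow>
        w \<in> D \<Longrightarrow> x \<in> D \<Longrightarrow>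
        weak_conv_W L ws w \<Longrightarrow> weak_conv_W L xs x \<Longrightarrow> ys \<longlonglongrightarrow> y \<Longrightarrow>
        limsup (\<lambda>n. ereal (\<Psi> (ws n) (ys n) - \<Psi> (ws n) (xs n))) \<le> ereal (\<Psi> w y - \<Psi> w x)"
    and \<Psi>_iv: "\<exists>e_\<Psi> c_\<Psi> d_\<Psi> \<beta>. c_\<Psi> \<ge> 0 \<and> d_\<Psi> \<ge> 0 \<and> 1 \<le> \<beta> \<and> \<beta> < p \<and>
        (\<forall>v. (\<exists>\<zeta> :: 'x \<Rightarrow>\<^sub>L real. \<forall>y. \<Psi> v y \<ge> \<Psi> v 0 + blinfun_apply \<zeta> y) \<and> \<bar>\<Psi> v 0\<bar> \<le> e_\<Psi> \<and>
             (\<forall>y. \<Psi> v y \<ge> - c_\<Psi> * norm y powr \<beta> - d_\<Psi>))"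
    \<comment> \<open>smallness and strict monotonicity\<close>
    and small: "c_F > c_G * norm \<gamma> powr p"
    and F_strict: "\<And>x y. x \<noteq> y \<Longrightarrow> blinfun_apply (F x - F y) (x - y) > 0"
  shows "\<forall>R. \<exists>C. \<forall>z \<xi> x. z \<in> K \<longrightarrow> norm z + norm \<xi> \<le> R \<longrightarrow>
           problem2 D L F E \<gamma> M \<Psi> z \<xi> x \<longrightarrow> norm x + norm (L x) \<le> C"
proof
  fix R :: real
  obtain e c\<^sub>\<Psi> d\<^sub>\<Psi> \<beta> where \<Psi>_growth: "0 \<le> c\<^sub>\<Psi>" "1 \<le> \<beta>" "\<beta> < p"
    "\<And>v. \<bar>\<Psi> v 0\<bar> \<le> e" "\<And>v y. - c\<^sub>\<Psi> * norm y powr \<beta> - d\<^sub>\<Psi> \<le> \<Psi> v y"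
    using \<Psi>_iv by blast
  then have \<Psi>_0: "\<And>v. \<Psi> v 0 \<le> e" by (meson abs_le_D1)
  obtain \<eta> b where \<eta>: "0 < \<eta>"
    and b: "\<forall>B. bounded B \<longrightarrow> bounded ((\<lambda>(x, y, z). b x y z) ` B)"
      "\<forall>x y1 y2. \<Psi> x y1 - \<Psi> x y2 \<le> b x y1 y2 * norm (y1 - y2) powr \<eta>"
    using \<Psi>_ii by (elim exE conjE) (rule that, assumption+)
  obtain r where r: "0 < r" "ball 0 r \<subseteq> (\<Inter>w\<in>K. M w)"
    using M_int mem_interior by blast
  then have M_ball: "\<And>z. z \<in> K \<Longrightarrow> ball 0 r \<subseteq> M z" by blast
  then have M_0: "\<And>z. z \<in> K \<Longrightarrow> 0 \<in> M z" using r(1) by (meson centre_in_ball subsetD)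
  have "0 \<in> D" using L_dom(1) by (rule subspace_0)
  \<comment> \<open>explicit instantiation: matching \<open>\<Psi> v 0\<close> and \<open>0 \<in> M z\<close> is higher-order\<close>
  obtain \<rho> where \<rho>: "\<And>z \<xi> x. z \<in> K \<Longrightarrow> norm \<xi> \<le> R \<Longrightarrow> problem2 D L F E \<gamma> M \<Psi> z \<xi> x \<Longrightarrow> norm x \<le> \<rho>"
    using problem2_solutions_norm_bounded[where K = K and M = M and D = D and L = L and F = F
        and \<Psi> = \<Psi> and E = E and \<gamma> = \<gamma> and R = R, OF F_coerc(1) \<Psi>_growth(2,3) M_0 \<open>0 \<in> D\<close> L_mono F_coerc(3)
        \<Psi>_0 \<Psi>_growth(5)] by blast
  obtain \<Psi>\<^sub>m\<^sub>a\<^sub>x where \<Psi>_max: "\<And>z v. norm z \<le> R \<Longrightarrow> norm v \<le> r \<Longrightarrow> \<Psi> z v \<le> \<Psi>\<^sub>m\<^sub>a\<^sub>x"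
    using psi_bounded_above_on_balls[where \<Psi> = \<Psi> and R = R and r = r, OF less_imp_le[OF \<eta>] b[rule_format] \<Psi>_0]
    by blast
  have "0 \<le> \<beta>" using \<Psi>_growth(2) by simp
  show "\<exists>C. \<forall>z \<xi> x. z \<in> K \<longrightarrow> norm z + norm \<xi> \<le> R \<longrightarrow>
      problem2 D L F E \<gamma> M \<Psi> z \<xi> x \<longrightarrow> norm x + norm (L x) \<le> C"
    by (rule problem2_graph_norm_bounded[where K = K and M = M and D = D and L = L and F = F
          and \<Psi> = \<Psi> and E = E and \<gamma> = \<gamma> and R = R,
          OF r(1) M_ball L_dom L_mono F_bdd \<Psi>_max \<Psi>_growth(1) \<open>0 \<le> \<beta>\<close> \<Psi>_growth(5) \<rho>])
qed

end
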